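(* For all sufficiently large constants $d$ and all sufficiently large $n$, with probability at least $1-10n^{-3/4}$ over the instances of $G\sim G(n,d/n)$, any two distinct cycles of $G$ each of length at most $4\frac{\ln n}{(\ln d)^5}$ are at distance greater than $10\frac{\log n}{(\log d)^5}$.
   Context: $G(n,d/n)$ is the Erdős–Rényi random graph on $n$ vertices with independent edge probability $d/n$, with $d$ a constant. The distance between two cycles is the minimum graph distance between a vertex of one and a vertex of the other. *)

theory Defs
  imports Complex_Main
begin

text \<open>Simple graphs on vertex set {0..<n}, given by their edge set (a set of 2-element sets).\<close>

definition all_edges :: "nat \<Rightarrow> nat set set" where
  "all_edges n = {e. \<exists>u v. u < n \<and> v < n \<and> u \<noteq> v \<and> e = {u, v}}"

text \<open>Probability that G(n,p) has property P: each of the possible edges is present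
  independently with probability p.\<close>
definition gnp_prob :: "nat \<Rightarrow> real \<Rightarrow> (nat set set \<Rightarrow> bool) \<Rightarrow> real" where
  "gnp_prob n p P = (\<Sum>E\<in>Pow (all_edges n).
      if P E then p ^ card E * (1 - p) ^ (card (all_edges n) - card E) else 0)"

definition is_cycle :: "nat set set \<Rightarrow> nat list \<Rightarrow> bool" where
  "is_cycle E c \<longleftrightarrow> length c \<ge> 3 \<and> distinct c \<and>
     (\<forall>i < length c. {c ! i, c ! ((i + 1) mod length c)} \<in> E)"

text \<open>The edge set of a cycle; two cycles are the same iff they have the same edge set.\<close>
definition cycle_edges :: "nat list \<Rightarrow> nat set set" where
  "cycle_edges c = {{c ! i, c ! ((i + 1) mod length c)} | i. i < length c}"

definition is_walk :: "nat set set \<Rightarrow> nat list \<Rightarrow> bool" where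
  "is_walk E xs \<longleftrightarrow> xs \<noteq> [] \<and> (\<forall>i. Suc i < length xs \<longrightarrow> {xs ! i, xs ! Suc i} \<in> E)"

text \<open>The graph distance between vertex sets A and B exceeds r: every walk from A to B
  has more than r edges (vacuous if no such walk exists, i.e. infinite distance).\<close>
definition dist_gt :: "nat set set \<Rightarrow> nat set \<Rightarrow> nat set \<Rightarrow> real \<Rightarrow> bool" where
  "dist_gt E A B r \<longleftrightarrow>
     (\<forall>xs. is_walk E xs \<and> hd xs \<in> A \<and> last xs \<in> B \<longrightarrow> real (length xs - 1) > r)"

end

theory Submission
  imports Defs "HOL-Real_Asymp.Real_Asymp"
begin

text \<open>
  Call an edge set dense if it has more edges than vertices. Two distinct cycles of lengths
  at most l joined by a walk with at most r edges contain a dense edge set with at most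
  2 l + r edges: the union of the two cycles if they meet, and otherwise the union of the
  cycles with a shortest connecting path. Dropping edges yields t <= 2 l + r edges spanning
  at most t - 1 vertices. There are at most t e^(2t) n^(t-1) such edge sets, each present in
  G(n, d/n) with probability (d/n)^t, so by the union bound the failure probability is at most
  T^2 (e^2 d)^T / n with T = 18 ln n / (ln d)^5. As (ln d)^5 beats 144 (2 + ln d), this is at
  most (ln n)^2 n^(1/8) / n, which is eventually below 10 n^(-3/4).
\<close>

section \<open>The union bound in \<open>G(n, p)\<close>\<close>

lemma sum_Pow_binomial_weights:
  assumes "finite A"
  shows "(\<Sum>E\<in>Pow A. (p::real) ^ card E * (1 - p) ^ (card A - card E)) = 1"
proof -
  have "(\<Sum>E\<in>Pow A. p ^ card E * (1 - p) ^ (card A - card E))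
      = (\<Sum>E\<in>Pow A. (\<Prod>x\<in>E. p) * (\<Prod>x\<in>A - E. 1 - p))"
    using assms by (intro sum.cong) (auto simp: card_Diff_subset finite_subset)
  also have "\<dots> = (\<Prod>x\<in>A. p + (1 - p))"
    by (rule prod_add[OF assms, symmetric])
  finally show ?thesis by simp
qed

lemma sum_Pow_binomial_weights_superset:
  assumes "finite A" "H \<subseteq> A"
  shows "(\<Sum>E\<in>Pow A. if H \<subseteq> E then (p::real) ^ card E * (1 - p) ^ (card A - card E) else 0)
       = p ^ card H"
proof -
  have fin: "finite H" "card (A - H) = card A - card H"
    using assms by (auto intro: finite_subset) (meson card_Diff_subset finite_subset)
  have img: "{E \<in> Pow A. H \<subseteq> E} = (\<union>) H ` Pow (A - H)"
  proof (intro equalityI subsetI)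
    fix E assume "E \<in> {E \<in> Pow A. H \<subseteq> E}"
    then show "E \<in> (\<union>) H ` Pow (A - H)" by (intro image_eqI[of _ _ "E - H"]) auto
  qed (use assms in auto)
  have "(\<Sum>E\<in>Pow A. if H \<subseteq> E then p ^ card E * (1 - p) ^ (card A - card E) else 0)
      = (\<Sum>E\<in>{E \<in> Pow A. H \<subseteq> E}. p ^ card E * (1 - p) ^ (card A - card E))"
    using assms by (subst sum.inter_filter[symmetric]) auto
  also have "\<dots> = (\<Sum>F\<in>Pow (A - H). p ^ card (H \<union> F) * (1 - p) ^ (card A - card (H \<union> F)))"
    by (rule sum.reindex_cong[where l="(\<union>) H", OF _ img]) (auto simp: inj_on_def)
  also have "\<dots> = (\<Sum>F\<in>Pow (A - H). p ^ card H * (p ^ card F * (1 - p) ^ (card (A - H) - card F)))"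
  proof (intro sum.cong refl)
    fix F assume F: "F \<in> Pow (A - H)"
    have "card (H \<union> F) = card H + card F"
      using F assms fin by (intro card_Un_disjoint) (auto intro: finite_subset)
    moreover have "card F \<le> card (A - H)"
      using F assms by (intro card_mono) auto
    ultimately show "p ^ card (H \<union> F) * (1 - p) ^ (card A - card (H \<union> F))
        = p ^ card H * (p ^ card F * (1 - p) ^ (card (A - H) - card F))"
      using fin by (simp add: power_add)
  qed
  also have "\<dots> = p ^ card H"
    using sum_Pow_binomial_weights[of "A - H" p] assms by (simp add: sum_distrib_left[symmetric])
  finally show ?thesis .
qed

lemma finite_all_edges: "finite (all_edges n)"
  by (rule finite_subset[of _ "Pow {..<n}"]) (auto simp: all_edges_def)

lemma gnp_prob_ge_union_bound:
  fixes p :: real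
  assumes "0 \<le> p" "p \<le> 1" and \<H>: "\<H> \<subseteq> Pow (all_edges n)"
    and bad: "\<And>E. E \<subseteq> all_edges n \<Longrightarrow> \<not> P E \<Longrightarrow> \<exists>H\<in>\<H>. H \<subseteq> E"
  shows "gnp_prob n p P \<ge> 1 - (\<Sum>H\<in>\<H>. p ^ card H)"
proof -
  define A where "A = all_edges n"
  define w where "w E = p ^ card E * (1 - p) ^ (card A - card E)" for E :: "nat set set"
  have A: "finite A" unfolding A_def by (rule finite_all_edges)
  have fin: "finite \<H>" using \<H> A unfolding A_def by (meson finite_Pow_iff finite_subset)
  have w0: "w E \<ge> 0" for E using assms by (simp add: w_def)
  have "gnp_prob n p P = (\<Sum>E\<in>Pow A. w E) - (\<Sum>E\<in>Pow A. if P E then 0 else w E)"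
    unfolding gnp_prob_def A_def[symmetric] w_def[symmetric] sum_subtractf[symmetric]
    by (intro sum.cong) auto
  also have "(\<Sum>E\<in>Pow A. w E) = 1"
    using sum_Pow_binomial_weights[OF A] unfolding w_def .
  finally have prob: "gnp_prob n p P = 1 - (\<Sum>E\<in>Pow A. if P E then 0 else w E)" .
  have "(\<Sum>E\<in>Pow A. if P E then 0 else w E) \<le> (\<Sum>E\<in>Pow A. \<Sum>H\<in>\<H>. if H \<subseteq> E then w E else 0)"
  proof (intro sum_mono)
    fix E assume E: "E \<in> Pow A"
    show "(if P E then 0 else w E) \<le> (\<Sum>H\<in>\<H>. if H \<subseteq> E then w E else 0)"
    proof (cases "P E")
      case False
      then obtain H where "H \<in> \<H>" "H \<subseteq> E" using bad E unfolding A_def by blast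
      then show ?thesis
        using False fin w0 member_le_sum[of H \<H> "\<lambda>H. if H \<subseteq> E then w E else 0"] by simp
    qed (simp add: sum_nonneg w0)
  qed
  also have "\<dots> = (\<Sum>H\<in>\<H>. \<Sum>E\<in>Pow A. if H \<subseteq> E then w E else 0)"
    by (rule sum.swap)
  also have "\<dots> = (\<Sum>H\<in>\<H>. p ^ card H)"
    using \<H> sum_Pow_binomial_weights_superset[OF A] unfolding w_def A_def by (intro sum.cong) auto
  finally show ?thesis using prob by linarith
qed

section \<open>Cycles and walks\<close>

definition cycle_edge :: "nat list \<Rightarrow> nat \<Rightarrow> nat set" where
  "cycle_edge c i = {c ! i, c ! ((i + 1) mod length c)}"

lemma cycle_edges_eq_image: "cycle_edges c = cycle_edge c ` {..<length c}"
  unfolding cycle_edges_def cycle_edge_def by auto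

lemma finite_cycle_edges: "finite (cycle_edges c)"
  unfolding cycle_edges_eq_image by simp

lemma cycle_edges_subset_set: "e \<in> cycle_edges c \<Longrightarrow> e \<subseteq> set c"
  unfolding cycle_edges_eq_image cycle_edge_def by (auto intro!: nth_mem mod_less_divisor)

lemma Union_cycle_edges: "is_cycle E c \<Longrightarrow> \<Union> (cycle_edges c) = set c"
proof (intro equalityI subsetI)
  fix x assume "is_cycle E c" "x \<in> set c"
  then obtain i where "i < length c" "x = c ! i"
    by (auto simp: in_set_conv_nth)
  then show "x \<in> \<Union> (cycle_edges c)"
    unfolding cycle_edges_eq_image cycle_edge_def by blast
qed (use cycle_edges_subset_set in blast)

lemma cycle_edge_nonempty: "e \<in> cycle_edges c \<Longrightarrow> e \<noteq> {}"
  unfolding cycle_edges_eq_image cycle_edge_def by auto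

lemma is_cycle_cycle_edges_subset: "is_cycle E c \<Longrightarrow> cycle_edges c \<subseteq> E"
  unfolding is_cycle_def cycle_edges_def by auto

lemma inj_on_cycle_edge:
  assumes "3 \<le> length c" "distinct c"
  shows "inj_on (cycle_edge c) {..<length c}"
proof (rule inj_onI)
  fix i j assume i: "i \<in> {..<length c}" and j: "j \<in> {..<length c}"
    and eq: "cycle_edge c i = cycle_edge c j"
  let ?k = "length c"
  have nth_eq: "c ! a = c ! b \<longleftrightarrow> a = b" if "a < ?k" "b < ?k" for a b
    using assms(2) that nth_eq_iff_index_eq by blast
  show "i = j"
  proof (rule ccontr)
    assume "i \<noteq> j"
    then have "c ! i = c ! ((j + 1) mod ?k)" "c ! ((i + 1) mod ?k) = c ! j"
      using eq i j nth_eq unfolding cycle_edge_def by (auto simp: doubleton_eq_iff)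
    moreover have "(a + 1) mod ?k < ?k" for a
      using assms(1) by (intro mod_less_divisor) linarith
    ultimately have "i = (j + 1) mod ?k" "j = (i + 1) mod ?k"
      using i j nth_eq by auto
    then have "(i + 2) mod ?k = i mod ?k"
      using i by (simp add: mod_Suc_eq)
    then have "?k dvd 2"
      by (simp add: mod_eq_dvd_iff_nat)
    then show False
      using assms(1) by (auto dest: dvd_imp_le)
  qed
qed

lemma card_cycle_edges: "is_cycle E c \<Longrightarrow> card (cycle_edges c) = length c"
  unfolding is_cycle_def cycle_edges_eq_image by (simp add: card_image inj_on_cycle_edge)

lemma mod_succ_closed_imp_mem:
  fixes k :: nat
  assumes "i0 \<in> I" "\<And>i. i \<in> I \<Longrightarrow> (i + 1) mod k \<in> I" "i0 < k" "i < k"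
  shows "i \<in> I"
proof -
  have "(i0 + m) mod k \<in> I" for m
  proof (induction m)
    case (Suc m)
    show ?case using assms(2)[OF Suc.IH] by (simp add: mod_Suc_eq)
  qed (use assms in simp)
  from this[of "k - i0 + i"] show ?thesis
    using assms(3,4) by simp
qed

lemma card_diff_lt_card_cycle_edges_diff:
  assumes c: "3 \<le> length c" "distinct c" and F: "\<Union>F \<subseteq> U"
    and meets: "set c \<inter> U \<noteq> {}" and new: "\<not> cycle_edges c \<subseteq> F"
  shows "card (set c - U) < card (cycle_edges c - F)"
proof -
  define k where "k = length c"
  define J where "J = {j. j < k \<and> c ! j \<notin> U}"
  define I where "I = {i. i < k \<and> cycle_edge c i \<notin> F}"
  define prev where "prev j = (j + (k - 1)) mod k" for j
  have k: "3 \<le> k" using c k_def by simp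
  have succ_prev: "(prev j + 1) mod k = j" if "j < k" for j
    using that k by (simp add: prev_def mod_Suc_eq)
  have edge_not_in_F: "cycle_edge c i \<notin> F" if "c ! j \<notin> U" "c ! j \<in> cycle_edge c i" for i j
    using that F by blast
  txt \<open>The edge entering a vertex outside U is not in F, so J injects into I via the
    predecessor; it is not onto because c also visits U.\<close>
  have prev_J: "prev ` J \<subseteq> I"
  proof
    fix i assume "i \<in> prev ` J"
    then obtain j where j: "j \<in> J" "i = prev j" by blast
    then have "c ! j \<in> cycle_edge c i"
      using succ_prev by (simp add: J_def cycle_edge_def k_def)
    then show "i \<in> I"
      using j k edge_not_in_F by (auto simp: I_def J_def prev_def)
  qed
  have inj_prev: "inj_on prev J"
    by (rule inj_on_inverseI[where g = "\<lambda>i. (i + 1) mod k"])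
       (use succ_prev in \<open>auto simp: J_def\<close>)
  have "\<exists>i\<in>I. i \<notin> prev ` J"
  proof (rule ccontr)
    assume "\<not> ?thesis"
    then have I_prev: "I \<subseteq> prev ` J" by blast
    have closed: "(i + 1) mod k \<in> I" if "i \<in> I" for i
    proof -
      obtain j where j: "j \<in> J" "i = prev j" using I_prev \<open>i \<in> I\<close> by blast
      then have "c ! j \<in> cycle_edge c j" by (simp add: cycle_edge_def)
      then show ?thesis
        using j succ_prev edge_not_in_F by (auto simp: I_def J_def)
    qed
    obtain i0 where i0: "i0 \<in> I"
      using new unfolding cycle_edges_eq_image I_def k_def by blast
    have all_J: "j \<in> J" if "j < k" for j
    proof -
      have "prev j \<in> I"
        using mod_succ_closed_imp_mem[OF i0 closed] i0 k by (simp add: I_def prev_def)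
      then obtain j' where "j' \<in> J" "prev j = prev j'" using I_prev by blast
      then show ?thesis
        using succ_prev[of j] succ_prev[of j'] that by (simp add: J_def)
    qed
    from meets obtain j where "j < k" "c ! j \<in> U"
      by (auto simp: in_set_conv_nth k_def)
    then show False using all_J by (simp add: J_def)
  qed
  then have "card (prev ` J) < card I"
    using prev_J by (intro psubset_card_mono) (auto simp: I_def)
  moreover have "card (set c - U) = card J"
  proof -
    have "set c - U = (!) c ` J"
      by (auto simp: J_def k_def in_set_conv_nth)
    then show ?thesis
      using c(2) by (simp add: card_image inj_on_def J_def k_def nth_eq_iff_index_eq)
  qed
  moreover have "card (cycle_edges c - F) = card I"
  proof -
    have "cycle_edges c - F = cycle_edge c ` I"
      by (auto simp: cycle_edges_eq_image I_def k_def)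
    then show ?thesis
      using inj_on_subset[OF inj_on_cycle_edge[OF c], of I]
      by (simp add: card_image I_def k_def subset_eq)
  qed
  ultimately show ?thesis
    using inj_prev by (simp add: card_image)
qed

lemma card_set_Un_lt_card_cycle_edges_Un:
  assumes c1: "is_cycle E c1" and c2: "is_cycle E c2"
    and ne: "cycle_edges c1 \<noteq> cycle_edges c2" and meet: "set c1 \<inter> set c2 \<noteq> {}"
  shows "card (set c1 \<union> set c2) < card (cycle_edges c1 \<union> cycle_edges c2)"
proof -
  have less: "card (set a \<union> set b) < card (cycle_edges a \<union> cycle_edges b)"
    if a: "is_cycle E a" and b: "is_cycle E b" and meet: "set a \<inter> set b \<noteq> {}"
      and new: "\<not> cycle_edges b \<subseteq> cycle_edges a" for a b
  proof -
    have "card (set a \<union> set b) = card (set a) + card (set b - set a)"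
      using card_Un_disjoint[of "set a" "set b - set a"] by simp
    also have "\<dots> < card (cycle_edges a) + card (cycle_edges b - cycle_edges a)"
      using card_diff_lt_card_cycle_edges_diff[of b "cycle_edges a" "set a"] a b meet new
        cycle_edges_subset_set card_cycle_edges[OF a]
      by (auto simp: is_cycle_def distinct_card)
    also have "\<dots> = card (cycle_edges a \<union> cycle_edges b)"
      using card_Un_disjoint[of "cycle_edges a" "cycle_edges b - cycle_edges a"]
      by (simp add: finite_cycle_edges)
    finally show ?thesis .
  qed
  show ?thesis
  proof (cases "cycle_edges c2 \<subseteq> cycle_edges c1")
    case True
    then have "\<not> cycle_edges c1 \<subseteq> cycle_edges c2" using ne by blast
    then show ?thesis
      using less[OF c2 c1] meet by (simp add: Un_commute Int_commute)
  qed (use less[OF c1 c2] meet in simp)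
qed

fun walk_edges :: "nat list \<Rightarrow> nat set set" where
  "walk_edges (x # y # ys) = insert {x, y} (walk_edges (y # ys))"
| "walk_edges _ = {}"

lemma is_walk_Cons_Cons: "is_walk E (x # y # ys) \<longleftrightarrow> {x, y} \<in> E \<and> is_walk E (y # ys)"
  unfolding is_walk_def by (auto simp: less_Suc_eq_0_disj)

lemma is_walk_drop: "is_walk E xs \<Longrightarrow> n < length xs \<Longrightarrow> is_walk E (drop n xs)"
  unfolding is_walk_def by auto

lemma is_walk_take: "is_walk E xs \<Longrightarrow> 0 < n \<Longrightarrow> is_walk E (take n xs)"
  unfolding is_walk_def by auto

lemma walk_edges_subset: "is_walk E ys \<Longrightarrow> walk_edges ys \<subseteq> E"
  by (induction ys rule: walk_edges.induct) (auto simp: is_walk_Cons_Cons)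

lemma finite_walk_edges: "finite (walk_edges ys)"
  by (induction ys rule: walk_edges.induct) auto

lemma Union_walk_edges_subset: "\<Union> (walk_edges ys) \<subseteq> set ys"
  by (induction ys rule: walk_edges.induct) auto

lemma card_walk_edges_le: "card (walk_edges ys) \<le> length ys - 1"
  by (induction ys rule: walk_edges.induct) (auto simp: card_insert_if finite_walk_edges)

lemma walk_edge_between_butlast_tl:
  "e \<in> walk_edges ys \<Longrightarrow> \<exists>x\<in>set (butlast ys). \<exists>y\<in>set (tl ys). e = {x, y}"
  by (induction ys rule: walk_edges.induct) auto

lemma set_butlast_insert_last: "xs \<noteq> [] \<Longrightarrow> set xs = insert (last xs) (set (butlast xs))"
  by (induction xs) auto

lemma card_butlast_le_card_walk_edges:
  "last ys \<notin> set (butlast ys) \<Longrightarrow> card (set (butlast ys)) \<le> card (walk_edges ys)"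
proof (induction ys rule: walk_edges.induct)
  case (1 x y ys)
  then have IH: "card (set (butlast (y # ys))) \<le> card (walk_edges (y # ys))"
    by simp
  show ?case
  proof (cases "x \<in> set (butlast (y # ys))")
    case False
    with "1.prems" have "x \<notin> set (y # ys)"
      using set_butlast_insert_last[of "y # ys"] by auto
    then have "{x, y} \<notin> walk_edges (y # ys)"
      using Union_walk_edges_subset by blast
    then show ?thesis
      using IH False by (simp add: finite_walk_edges)
  qed (use IH in \<open>simp add: card_insert_if finite_walk_edges\<close>)
qed simp_all

section \<open>Two close cycles span a dense edge set\<close>

lemma shortest_walk_between:
  assumes "is_walk E xs" "hd xs \<in> A" "last xs \<in> B"
  obtains ys where "is_walk E ys" "hd ys \<in> A" "last ys \<in> B" "length ys \<le> length xs"
    "set (tl ys) \<inter> A = {}" "set (butlast ys) \<inter> B = {}"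
proof -
  let ?between = "\<lambda>ys. is_walk E ys \<and> hd ys \<in> A \<and> last ys \<in> B"
  obtain ys where ys: "?between ys" and min: "\<And>zs. ?between zs \<Longrightarrow> length ys \<le> length zs"
    using ex_has_least_nat[of ?between xs length] assms by blast
  have ne: "ys \<noteq> []" using ys by (simp add: is_walk_def)
  have "set (tl ys) \<inter> A = {}"
  proof (rule ccontr)
    assume "set (tl ys) \<inter> A \<noteq> {}"
    then obtain j where j: "Suc j < length ys" "ys ! Suc j \<in> A"
      by (auto simp: in_set_conv_nth nth_tl less_diff_conv)
    then have "?between (drop (Suc j) ys)"
      using ys by (auto simp: is_walk_drop hd_drop_conv_nth)
    then show False
      using min[of "drop (Suc j) ys"] j by simp
  qed
  moreover have "set (butlast ys) \<inter> B = {}"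
  proof (rule ccontr)
    assume "set (butlast ys) \<inter> B \<noteq> {}"
    then obtain j where "j < length ys - 1" "ys ! j \<in> B"
      by (auto simp: in_set_conv_nth nth_butlast)
    then have "?between (take (Suc j) ys)"
      using ys ne by (auto simp: is_walk_take last_conv_nth)
    then show False
      using min[of "take (Suc j) ys"] \<open>j < length ys - 1\<close> by simp
  qed
  ultimately show ?thesis
    using that ys min[of xs] assms by blast
qed

lemma card_Union_lt_card_disjoint_cycles_walk:
  assumes c1: "is_cycle E c1" and c2: "is_cycle E c2" and disj: "set c1 \<inter> set c2 = {}"
    and ys: "ys \<noteq> []" "hd ys \<in> set c1" "last ys \<in> set c2"
      "set (tl ys) \<inter> set c1 = {}" "set (butlast ys) \<inter> set c2 = {}"
  defines "H \<equiv> cycle_edges c1 \<union> cycle_edges c2 \<union> walk_edges ys"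
  shows "card (\<Union>H) < card H"
proof -
  let ?W = "walk_edges ys" and ?P = "set (butlast ys)"
  txt \<open>The three edge sets are disjoint, and the path adds at least \<open>card ?P\<close> edges
    but at most \<open>card ?P - 1\<close> vertices.\<close>
  have hd_P: "hd ys \<in> ?P"
    using ys(1-3) disj by (cases ys) auto
  have "e \<notin> cycle_edges c1 \<union> cycle_edges c2" if eW: "e \<in> ?W" for e
  proof -
    obtain x y where "x \<in> ?P" "y \<in> set (tl ys)" "e = {x, y}"
      using walk_edge_between_butlast_tl[OF eW] by blast
    then show ?thesis
      using ys(4,5) cycle_edges_subset_set[of e c1] cycle_edges_subset_set[of e c2] by auto
  qed
  then have "cycle_edges c1 \<inter> ?W = {}" "cycle_edges c2 \<inter> ?W = {}"
    by auto
  moreover have "e \<notin> cycle_edges c2" if "e \<in> cycle_edges c1" for e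
    using cycle_edges_subset_set[OF that] cycle_edge_nonempty[OF that]
      cycle_edges_subset_set[of e c2] disj by blast
  then have "cycle_edges c1 \<inter> cycle_edges c2 = {}"
    by auto
  ultimately have "card H = length c1 + length c2 + card ?W"
    unfolding H_def using card_cycle_edges[OF c1] card_cycle_edges[OF c2]
    by (simp add: card_Un_disjoint finite_cycle_edges finite_walk_edges Int_Un_distrib2)
  moreover have "card (\<Union>H) \<le> length c1 + length c2 + (card ?P - 1)"
  proof -
    have "\<Union>?W \<subseteq> insert (last ys) ?P"
      using Union_walk_edges_subset[of ys] set_butlast_insert_last[OF ys(1)] by simp
    then have "\<Union>H \<subseteq> set c1 \<union> set c2 \<union> (?P - {hd ys})"
      unfolding H_def using ys(2,3) Union_cycle_edges[OF c1] Union_cycle_edges[OF c2] by auto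
    then have "card (\<Union>H) \<le> card (set c1 \<union> set c2 \<union> (?P - {hd ys}))"
      by (intro card_mono) auto
    also have "\<dots> \<le> card (set c1) + card (set c2) + card (?P - {hd ys})"
      by (meson add_mono card_Un_le le_refl order_trans)
    also have "\<dots> = length c1 + length c2 + (card ?P - 1)"
      using c1 c2 hd_P by (simp add: is_cycle_def distinct_card)
    finally show ?thesis .
  qed
  moreover have "card ?P \<le> card ?W"
    using ys(3,5) by (intro card_butlast_le_card_walk_edges) blast
  moreover have "0 < card ?P"
    using hd_P by (auto simp: card_gt_0_iff)
  ultimately show ?thesis by linarith
qed

lemma close_cycles_dense_subgraph:
  assumes c1: "is_cycle E c1" and c2: "is_cycle E c2" and ne: "cycle_edges c1 \<noteq> cycle_edges c2"
    and xs: "is_walk E xs" "hd xs \<in> set c1" "last xs \<in> set c2"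
  obtains H where "H \<subseteq> E" "finite (\<Union>H)" "card (\<Union>H) < card H"
    "card H \<le> length c1 + length c2 + (length xs - 1)"
proof (cases "set c1 \<inter> set c2 = {}")
  case False
  let ?H = "cycle_edges c1 \<union> cycle_edges c2"
  have "\<Union>?H = set c1 \<union> set c2"
    using Union_cycle_edges[OF c1] Union_cycle_edges[OF c2] by simp
  moreover have "card ?H \<le> length c1 + length c2"
    using card_Un_le[of "cycle_edges c1" "cycle_edges c2"] card_cycle_edges[OF c1]
      card_cycle_edges[OF c2] by simp
  ultimately show ?thesis
    using that[of ?H] card_set_Un_lt_card_cycle_edges_Un[OF c1 c2 ne False]
      is_cycle_cycle_edges_subset[OF c1] is_cycle_cycle_edges_subset[OF c2] by auto
next
  case True
  obtain ys where ys: "is_walk E ys" "hd ys \<in> set c1" "last ys \<in> set c2" "length ys \<le> length xs"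
    "set (tl ys) \<inter> set c1 = {}" "set (butlast ys) \<inter> set c2 = {}"
    using shortest_walk_between[OF xs] .
  let ?H = "cycle_edges c1 \<union> cycle_edges c2 \<union> walk_edges ys"
  have ys_ne: "ys \<noteq> []" using ys(1) by (simp add: is_walk_def)
  have "\<Union>?H \<subseteq> set c1 \<union> set c2 \<union> set ys"
    using cycle_edges_subset_set Union_walk_edges_subset by blast
  then have "finite (\<Union>?H)"
    by (rule finite_subset) simp
  moreover have "card ?H \<le> length c1 + length c2 + (length xs - 1)"
    using card_Un_le[of "cycle_edges c1 \<union> cycle_edges c2" "walk_edges ys"]
      card_Un_le[of "cycle_edges c1" "cycle_edges c2"] card_cycle_edges[OF c1]
      card_cycle_edges[OF c2] card_walk_edges_le[of ys] ys(4)
    by linarith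
  ultimately show ?thesis
    using that[of ?H] card_Union_lt_card_disjoint_cycles_walk[OF c1 c2 True ys_ne ys(2,3,5,6)]
      is_cycle_cycle_edges_subset[OF c1] is_cycle_cycle_edges_subset[OF c2]
      walk_edges_subset[OF ys(1)] by auto
qed

lemma obtain_dense_subset:
  assumes "finite (\<Union>H)" "card (\<Union>H) < card H"
  obtains H' where "H' \<subseteq> H" "card H' = card (\<Union>H) + 1" "card (\<Union>H') < card H'"
proof -
  obtain H' where H': "H' \<subseteq> H" "card H' = card (\<Union>H) + 1"
    using obtain_subset_with_card_n[of "card (\<Union>H) + 1" H] assms(2) by auto
  moreover have "card (\<Union>H') \<le> card (\<Union>H)"
    using H'(1) assms(1) by (intro card_mono) auto
  ultimately show ?thesis using that by simp
qed

definition dense_edge_sets :: "nat \<Rightarrow> nat \<Rightarrow> nat set set set" where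
  "dense_edge_sets n t = {H. H \<subseteq> all_edges n \<and> card H = t \<and> card (\<Union>H) < t}"

lemma finite_dense_edge_sets: "finite (dense_edge_sets n t)"
  by (rule finite_subset[of _ "Pow (all_edges n)"])
     (auto simp: dense_edge_sets_def finite_all_edges)

lemma gnp_prob_close_cycles_ge:
  fixes p l r :: real
  assumes p: "0 \<le> p" "p \<le> 1"
  shows "gnp_prob n p (\<lambda>E. \<forall>c1 c2.
      is_cycle E c1 \<and> is_cycle E c2 \<and> cycle_edges c1 \<noteq> cycle_edges c2 \<and>
      real (length c1) \<le> l \<and> real (length c2) \<le> l \<longrightarrow> dist_gt E (set c1) (set c2) r)
    \<ge> 1 - (\<Sum>t = 1..nat \<lfloor>2 * l + r\<rfloor>. real (card (dense_edge_sets n t)) * p ^ t)"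
proof -
  let ?T = "nat \<lfloor>2 * l + r\<rfloor>"
  let ?\<H> = "\<Union>t\<in>{1..?T}. dense_edge_sets n t"
  have "(\<Sum>H\<in>?\<H>. p ^ card H) = (\<Sum>t = 1..?T. \<Sum>H\<in>dense_edge_sets n t. p ^ card H)"
    by (rule sum.UNION_disjoint) (auto simp: finite_dense_edge_sets, auto simp: dense_edge_sets_def)
  also have "\<dots> = (\<Sum>t = 1..?T. real (card (dense_edge_sets n t)) * p ^ t)"
    by (intro sum.cong refl) (simp add: dense_edge_sets_def)
  finally have sum_eq: "(\<Sum>H\<in>?\<H>. p ^ card H) = \<dots>" .
  have "gnp_prob n p (\<lambda>E. \<forall>c1 c2.
      is_cycle E c1 \<and> is_cycle E c2 \<and> cycle_edges c1 \<noteq> cycle_edges c2 \<and>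
      real (length c1) \<le> l \<and> real (length c2) \<le> l \<longrightarrow> dist_gt E (set c1) (set c2) r)
    \<ge> 1 - (\<Sum>H\<in>?\<H>. p ^ card H)"
  proof (rule gnp_prob_ge_union_bound[OF p])
    show "?\<H> \<subseteq> Pow (all_edges n)"
      by (auto simp: dense_edge_sets_def)
  next
    fix E assume E: "E \<subseteq> all_edges n" and "\<not> (\<forall>c1 c2.
      is_cycle E c1 \<and> is_cycle E c2 \<and> cycle_edges c1 \<noteq> cycle_edges c2 \<and>
      real (length c1) \<le> l \<and> real (length c2) \<le> l \<longrightarrow> dist_gt E (set c1) (set c2) r)"
    then obtain c1 c2 xs where c: "is_cycle E c1" "is_cycle E c2" "cycle_edges c1 \<noteq> cycle_edges c2"
        "real (length c1) \<le> l" "real (length c2) \<le> l"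
      and xs: "is_walk E xs" "hd xs \<in> set c1" "last xs \<in> set c2" "real (length xs - 1) \<le> r"
      by (auto simp: dist_gt_def not_less)
    obtain H where H: "H \<subseteq> E" "finite (\<Union>H)" "card (\<Union>H) < card H"
      "card H \<le> length c1 + length c2 + (length xs - 1)"
      using close_cycles_dense_subgraph[OF c(1-3) xs(1-3)] .
    obtain H' where H': "H' \<subseteq> H" "card H' = card (\<Union>H) + 1" "card (\<Union>H') < card H'"
      using obtain_dense_subset[OF H(2,3)] .
    have "real (card H') \<le> 2 * l + r"
      using H(3,4) H'(2) c(4,5) xs(4) by linarith
    then have "card H' \<in> {1..?T}"
      using H'(2) by (simp add: le_nat_floor)
    moreover have "H' \<in> dense_edge_sets n (card H')"
      using H(1) H'(1,3) E by (auto simp: dense_edge_sets_def)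
    ultimately show "\<exists>H\<in>?\<H>. H \<subseteq> E"
      using H(1) H'(1) by blast
  qed
  then show ?thesis
    unfolding sum_eq .
qed

section \<open>Counting dense edge sets\<close>

lemma card_dense_edge_sets_le:
  assumes "t \<le> n + 1"
  shows "card (dense_edge_sets n t) \<le> (n choose (t - 1)) * ((t - 1)\<^sup>2 choose t)"
proof -
  define Ss where "Ss = {S. S \<subseteq> {..<n} \<and> card S = t - 1}"
  define pairs where "pairs S = (\<lambda>(u, v). {u, v}) ` (S \<times> S)" for S :: "nat set"
  have finite_pairs: "finite (pairs S)" if "S \<in> Ss" for S
    using that finite_subset[of S "{..<n}"] by (simp add: Ss_def pairs_def)
  have "dense_edge_sets n t \<subseteq> (\<Union>S\<in>Ss. {H. H \<subseteq> pairs S \<and> card H = t})"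
  proof
    fix H assume "H \<in> dense_edge_sets n t"
    then have H: "H \<subseteq> all_edges n" "card H = t" "card (\<Union>H) < t"
      by (auto simp: dense_edge_sets_def)
    have "\<Union>H \<subseteq> {..<n}"
      using H(1) by (auto simp: all_edges_def)
    moreover have "card (\<Union>H) \<le> t - 1" "t - 1 \<le> card {..<n}"
      using H(3) assms by simp_all
    ultimately obtain S where S: "\<Union>H \<subseteq> S" "S \<subseteq> {..<n}" "card S = t - 1"
      using exists_subset_between[of "\<Union>H" "t - 1" "{..<n}"] by auto
    have "H \<subseteq> pairs S"
    proof
      fix e assume "e \<in> H"
      moreover obtain u v where "e = {u, v}"
        using H(1) \<open>e \<in> H\<close> by (auto simp: all_edges_def)
      ultimately show "e \<in> pairs S"
        using S(1) unfolding pairs_def by blast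
    qed
    then show "H \<in> (\<Union>S\<in>Ss. {H. H \<subseteq> pairs S \<and> card H = t})"
      using S H(2) by (auto simp: Ss_def)
  qed
  then have "card (dense_edge_sets n t) \<le> card (\<Union>S\<in>Ss. {H. H \<subseteq> pairs S \<and> card H = t})"
    using finite_pairs by (intro card_mono) (auto simp: Ss_def)
  also have "\<dots> \<le> (\<Sum>S\<in>Ss. card {H. H \<subseteq> pairs S \<and> card H = t})"
    by (rule card_UN_le) (simp add: Ss_def)
  also have "\<dots> \<le> (\<Sum>S\<in>Ss. (t - 1)\<^sup>2 choose t)"
  proof (rule sum_mono)
    fix S assume S: "S \<in> Ss"
    have "card (pairs S) \<le> card (S \<times> S)"
      unfolding pairs_def by (rule card_image_le) (use S finite_subset in \<open>auto simp: Ss_def\<close>)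
    also have "\<dots> = (t - 1)\<^sup>2"
      using S by (simp add: Ss_def card_cartesian_product power2_eq_square)
    finally show "card {H. H \<subseteq> pairs S \<and> card H = t} \<le> (t - 1)\<^sup>2 choose t"
      using n_subsets[OF finite_pairs[OF S]] by (simp add: binomial_right_mono)
  qed
  also have "\<dots> = (n choose (t - 1)) * ((t - 1)\<^sup>2 choose t)"
    using n_subsets[of "{..<n}" "t - 1"] by (simp add: Ss_def)
  finally show ?thesis .
qed

lemma pow_le_fact_mult_exp: "real k ^ k \<le> fact k * exp (real k)"
proof -
  have "(\<Sum>m\<in>{k}. real k ^ m /\<^sub>R fact m) \<le> (\<Sum>m. real k ^ m /\<^sub>R fact m)"
    by (intro sum_le_suminf summable_exp_generic) auto
  then have "real k ^ k / fact k \<le> exp (real k)"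
    by (simp add: exp_def divide_inverse mult.commute)
  then show ?thesis
    by (simp add: divide_le_eq mult.commute)
qed

lemma card_dense_edge_sets_le_real:
  assumes "1 \<le> t" "t \<le> n + 1"
  shows "real (card (dense_edge_sets n t)) \<le> real t * exp 2 ^ t * real n ^ (t - 1)"
proof -
  have fact_t: "fact t = real t * fact (t - 1)"
    using assms(1) by (simp add: fact_reduce)
  have "real (card (dense_edge_sets n t)) \<le> real (n choose (t - 1)) * real ((t - 1)\<^sup>2 choose t)"
    using card_dense_edge_sets_le[OF assms(2)] by (simp flip: of_nat_mult)
  also have "\<dots> \<le> real n ^ (t - 1) / fact (t - 1) * ((real t ^ t)\<^sup>2 / fact t)"
  proof (intro mult_mono)
    show "real (n choose (t - 1)) \<le> real n ^ (t - 1) / fact (t - 1)"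
    proof -
      have "real ((n choose (t - 1)) * fact (t - 1)) \<le> real (n ^ (t - 1))"
        using binomial_fact_pow[of n "t - 1"] by (simp only: of_nat_le_iff)
      then show ?thesis
        by (simp add: field_simps)
    qed
    have "real (((t - 1)\<^sup>2 choose t) * fact t) \<le> real (((t - 1)\<^sup>2) ^ t)"
      using binomial_fact_pow[of "(t - 1)\<^sup>2" t] by (simp only: of_nat_le_iff)
    moreover have "real (((t - 1)\<^sup>2) ^ t) \<le> (real t ^ 2) ^ t"
      by (simp add: power_mono)
    ultimately have "real ((t - 1)\<^sup>2 choose t) * fact t \<le> (real t ^ 2) ^ t"
      by simp
    also have "\<dots> = (real t ^ t)\<^sup>2"
      by (simp flip: power_mult add: mult.commute)
    finally show "real ((t - 1)\<^sup>2 choose t) \<le> (real t ^ t)\<^sup>2 / fact t"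
      by (simp add: field_simps)
  qed auto
  also have "\<dots> \<le> real n ^ (t - 1) / fact (t - 1) * ((fact t * exp (real t))\<^sup>2 / fact t)"
    by (intro mult_left_mono divide_right_mono power_mono pow_le_fact_mult_exp) auto
  also have "\<dots> = real t * exp 2 ^ t * real n ^ (t - 1)"
    by (simp add: fact_t power2_eq_square exp_of_nat_mult[symmetric] exp_add[symmetric] field_simps)
  finally show ?thesis .
qed

lemma sum_dense_edge_sets_le:
  assumes n: "0 < n" and T: "T \<le> n + 1" and d: "0 \<le> d" "1 \<le> exp 2 * d"
  shows "(\<Sum>t = 1..T. real (card (dense_edge_sets n t)) * (d / real n) ^ t)
    \<le> real T * real T * (exp 2 * d) ^ T / real n"
proof -
  have "real (card (dense_edge_sets n t)) * (d / real n) ^ t \<le> real T * (exp 2 * d) ^ T / real n"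
    if t: "t \<in> {1..T}" for t
  proof -
    have "real (card (dense_edge_sets n t)) * (d / real n) ^ t
        \<le> real t * exp 2 ^ t * real n ^ (t - 1) * (d / real n) ^ t"
      using card_dense_edge_sets_le_real[of t n] t T d by (intro mult_right_mono) auto
    also have "\<dots> = real t * (exp 2 * d) ^ t / real n"
      using t n by (cases t) (simp_all add: power_divide power_mult_distrib field_simps)
    also have "\<dots> \<le> real T * (exp 2 * d) ^ T / real n"
      using t d by (intro divide_right_mono mult_mono power_increasing) auto
    finally show ?thesis .
  qed
  then have "(\<Sum>t = 1..T. real (card (dense_edge_sets n t)) * (d / real n) ^ t)
      \<le> (\<Sum>t = 1..T. real T * (exp 2 * d) ^ T / real n)"
    by (rule sum_mono)
  then show ?thesis by simp
qed

section \<open>The numerical estimate\<close>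

lemma exp2_mult_pow_le_powr:
  assumes d: "0 < d" "4 \<le> ln d" and n: "1 \<le> n"
    and T: "real T \<le> 18 * ln (real n) / (ln d) ^ 5"
  shows "(exp 2 * d) ^ T \<le> real n powr (1/8)"
proof -
  let ?x = "ln d" and ?L = "ln (real n)"
  have "(4::real) ^ 4 * ?x \<le> ?x ^ 4 * ?x"
    by (intro mult_right_mono power_mono) (use d(2) in linarith)+
  moreover have "?x ^ 5 = ?x ^ 4 * ?x"
    by algebra
  ultimately have "18 * (2 + ?x) / ?x ^ 5 \<le> 1 / 8"
    using d by (simp add: divide_le_eq)
  then have "?L * (18 * (2 + ?x) / ?x ^ 5) \<le> ?L * (1 / 8)"
    using n by (intro mult_left_mono) auto
  then have exponent: "18 * ?L / ?x ^ 5 * (2 + ?x) \<le> ?L / 8"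
    by (simp add: field_simps)
  have "real T * (2 + ?x) \<le> 18 * ?L / ?x ^ 5 * (2 + ?x)"
    using T d(2) by (intro mult_right_mono) auto
  have "exp 2 * d = exp (2 + ?x)"
    using d by (simp add: exp_add)
  then have "(exp 2 * d) ^ T = exp (real T * (2 + ?x))"
    by (simp add: exp_of_nat_mult)
  also have "\<dots> \<le> exp (?L / 8)"
    using \<open>real T * (2 + ?x) \<le> _\<close> exponent by simp
  also have "\<dots> = real n powr (1/8)"
    using n by (simp add: powr_def)
  finally show ?thesis .
qed

lemma sum_dense_edge_sets_prob_le:
  assumes d: "exp 4 \<le> d" and n: "d \<le> real n" "ln (real n) ^ 2 \<le> 10 * real n powr (1/8)"
    and T: "real T \<le> 18 * ln (real n) / (ln d) ^ 5"
  shows "(\<Sum>t = 1..T. real (card (dense_edge_sets n t)) * (d / real n) ^ t)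
    \<le> 10 * real n powr (-3/4)"
proof -
  let ?L = "ln (real n)"
  have "1 \<le> d"
    using d order_trans[of 1 "exp 4" d] by simp
  then have d0: "0 < d" "4 \<le> ln d" and n1: "1 \<le> n"
    using d n(1) by (simp_all add: ln_ge_iff)
  have "(4::real) ^ 5 \<le> ln d ^ 5"
    using d0 by (intro power_mono) auto
  then have "18 * ?L \<le> ln d ^ 5 * ?L"
    using n1 by (intro mult_right_mono) auto
  moreover have "0 < ln d ^ 5"
    using d0(2) by (intro zero_less_power) linarith
  ultimately have "18 * ?L / (ln d) ^ 5 \<le> ?L"
    by (simp add: pos_divide_le_eq mult.commute)
  then have T_L: "real T \<le> ?L"
    using T by linarith
  then have "T \<le> n + 1"
    using ln_le_minus_one[of "real n"] n1 by simp
  then have "(\<Sum>t = 1..T. real (card (dense_edge_sets n t)) * (d / real n) ^ t)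
      \<le> real T * real T * (exp 2 * d) ^ T / real n"
    using d0 n1 mult_mono[of 1 "exp 2" 1 d] \<open>1 \<le> d\<close>
    by (intro sum_dense_edge_sets_le) auto
  also have "\<dots> \<le> ?L ^ 2 * real n powr (1/8) / real n"
    using T_L d0 n1 exp2_mult_pow_le_powr[OF d0 n1 T]
    by (intro divide_right_mono mult_mono) (auto simp: power2_eq_square mult_mono)
  also have "\<dots> \<le> 10 * real n powr (1/8) * real n powr (1/8) / real n"
    using n(2) by (intro divide_right_mono mult_right_mono) auto
  also have "\<dots> = 10 * (real n powr (1/4) / real n powr 1)"
    using n1 by (simp add: powr_add[symmetric])
  also have "\<dots> = 10 * real n powr (-3/4)"
    unfolding powr_diff[symmetric] by simp
  finally show ?thesis .
qed

lemma gnp_prob_far_cycles_ge: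
  assumes d: "exp 4 \<le> d" and n: "d \<le> real n" "ln (real n) ^ 2 \<le> 10 * real n powr (1/8)"
  shows "gnp_prob n (d / real n) (\<lambda>E. \<forall>c1 c2.
        is_cycle E c1 \<and> is_cycle E c2 \<and> cycle_edges c1 \<noteq> cycle_edges c2 \<and>
        real (length c1) \<le> 4 * ln (real n) / (ln d) ^ 5 \<and>
        real (length c2) \<le> 4 * ln (real n) / (ln d) ^ 5
        \<longrightarrow> dist_gt E (set c1) (set c2) (10 * ln (real n) / (ln d) ^ 5))
    \<ge> 1 - 10 * real n powr (-3/4)"
proof -
  let ?l = "4 * ln (real n) / (ln d) ^ 5" and ?r = "10 * ln (real n) / (ln d) ^ 5"
  have "1 \<le> d"
    using d order_trans[of 1 "exp 4" d] by simp
  then have p: "0 \<le> d / real n" "d / real n \<le> 1" and "1 \<le> real n"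
    using n by auto
  then have "0 \<le> 18 * ln (real n) / (ln d) ^ 5"
    using \<open>1 \<le> d\<close> by simp
  moreover have "2 * ?l + ?r = 18 * ln (real n) / (ln d) ^ 5"
    by (simp add: add_divide_distrib)
  ultimately have "real (nat \<lfloor>2 * ?l + ?r\<rfloor>) \<le> 18 * ln (real n) / (ln d) ^ 5"
    by (metis of_nat_floor)
  from sum_dense_edge_sets_prob_le[OF d n this] show ?thesis
    using gnp_prob_close_cycles_ge[OF p, of n ?l ?r] by linarith
qed

theorem lemmaK3:
  shows "\<exists>d0::real. \<forall>d \<ge> d0. \<exists>n0::nat. \<forall>n \<ge> n0.
    gnp_prob n (d / real n) (\<lambda>E. \<forall>c1 c2.
        is_cycle E c1 \<and> is_cycle E c2 \<and> cycle_edges c1 \<noteq> cycle_edges c2 \<and>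
        real (length c1) \<le> 4 * ln (real n) / (ln d) ^ 5 \<and>
        real (length c2) \<le> 4 * ln (real n) / (ln d) ^ 5
        \<longrightarrow> dist_gt E (set c1) (set c2) (10 * ln (real n) / (ln d) ^ 5))
    \<ge> 1 - 10 * real n powr (-3/4)"
proof -
  have "\<exists>n0. \<forall>n \<ge> n0. d \<le> real n \<and> ln (real n) ^ 2 \<le> 10 * real n powr (1/8)" for d :: real
  proof -
    have "\<forall>\<^sub>F n in sequentially. d \<le> real n"
      using filterlim_real_sequentially unfolding filterlim_at_top by blast
    moreover have "\<forall>\<^sub>F n in sequentially. ln (real n) ^ 2 \<le> 10 * real n powr (1/8)"
      by real_asymp
    ultimately have "\<forall>\<^sub>F n in sequentially. d \<le> real n \<and> ln (real n) ^ 2 \<le> 10 * real n powr (1/8)"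
      by (rule eventually_conj)
    then show ?thesis
      unfolding eventually_sequentially .
  qed
  then obtain N where N: "\<And>d n. N d \<le> n \<Longrightarrow> d \<le> real n \<and> ln (real n) ^ 2 \<le> 10 * real n powr (1/8)"
    by metis
  show ?thesis
    apply (intro exI[of _ "exp 4"] allI impI)
    subgoal for d
      using N[of d] by (intro exI[of _ "N d"] allI impI gnp_prob_far_cycles_ge) auto
    done
qed

end
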